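(* Let $\alpha>0$, $A\ge0$, $B>0$, $t>0$, and let $P_n(x,t)$ be the monic polynomials orthogonal on $[0,\infty)$ w.r.t. $w(x,t)=x^\alpha e^{-x}(A+B\theta(x-t))$, with norms $h_n(t)$ and recurrence $zP_n=P_{n+1}+\alpha_n(t)P_n+\beta_n(t)P_{n-1}$. Let $R_n(t)=Bt^\alpha e^{-t}\{P_n(t,t)\}^2/h_n(t)$, $r_n(t)=Bt^\alpha e^{-t}P_n(t,t)P_{n-1}(t,t)/h_{n-1}(t)$ for $n\ge1$, and $r_0:=0$. Then for $n\ge0$ $$\alpha_n=2n+1+\alpha+tR_n,\qquad r_{n+1}+r_n=R_n(t-\alpha_n).$$
   Context: $\theta$ is the Heaviside function ($1$ for $x>0$, $0$ otherwise); $P_n(t,t)$ is $P_n(x,t)$ at $x=t$; $P_{-1}:=0$. *)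

theory Defs
  imports "HOL-Analysis.Analysis" "HOL-Computational_Algebra.Polynomial"
begin

definition heaviside :: "real \<Rightarrow> real" where
  "heaviside x = (if x > 0 then 1 else 0)"

definition jump_weight :: "real \<Rightarrow> real \<Rightarrow> real \<Rightarrow> real \<Rightarrow> real \<Rightarrow> real" where
  "jump_weight \<alpha> A B t x = x powr \<alpha> * exp (- x) * (A + B * heaviside (x - t))"

definition monic_orthogonal :: "(real \<Rightarrow> real) \<Rightarrow> (nat \<Rightarrow> real poly) \<Rightarrow> bool" where
  "monic_orthogonal w P \<longleftrightarrow>
     (\<forall>n. degree (P n) = n \<and> lead_coeff (P n) = 1 \<and>
        (\<forall>k<n. ((\<lambda>x. poly (P n) x * x ^ k * w x) has_integral 0) {0..}))"

definition op_norm :: "(real \<Rightarrow> real) \<Rightarrow> (nat \<Rightarrow> real poly) \<Rightarrow> nat \<Rightarrow> real" where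
  "op_norm w P n = integral {0..} (\<lambda>x. (poly (P n) x)^2 * w x)"

definition prev_poly :: "(nat \<Rightarrow> real poly) \<Rightarrow> nat \<Rightarrow> real poly" where
  "prev_poly P n = (if n = 0 then 0 else P (n - 1))"

definition R_aux :: "real \<Rightarrow> real \<Rightarrow> real \<Rightarrow> real \<Rightarrow> (nat \<Rightarrow> real poly) \<Rightarrow> nat \<Rightarrow> real" where
  "R_aux \<alpha> A B t P n =
     B * t powr \<alpha> * exp (- t) * (poly (P n) t)^2 / op_norm (jump_weight \<alpha> A B t) P n"

definition r_aux :: "real \<Rightarrow> real \<Rightarrow> real \<Rightarrow> real \<Rightarrow> (nat \<Rightarrow> real poly) \<Rightarrow> nat \<Rightarrow> real" where
  "r_aux \<alpha> A B t P n = (if n = 0 then 0 else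
     B * t powr \<alpha> * exp (- t) * poly (P n) t * poly (P (n - 1)) t
       / op_norm (jump_weight \<alpha> A B t) P (n - 1))"

end

theory Submission
  imports Defs "HOL-Real_Asymp.Real_Asymp"
begin

text \<open>The functional \<open>q \<mapsto> \<integral> q w\<close> is \<open>A\<close> times a Laguerre integral over \<open>[0,\<infinity>)\<close> plus \<open>B\<close> times one
  over \<open>[t,\<infinity>)\<close>. Integrating by parts with Pearson's equation \<open>(x w)' = (\<alpha> + 1 - x) w\<close>, the integral
  of \<open>(\<alpha> + 1) P\<^sub>n\<^sup>2 - x P\<^sub>n\<^sup>2 + x (P\<^sub>n\<^sup>2)'\<close> equals the boundary term \<open>-B t\<^sup>\<alpha>\<^sup>+\<^sup>1 e\<^sup>-\<^sup>t P\<^sub>n(t)\<^sup>2\<close>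
  produced by the jump; by orthogonality and the recurrence the same integral is
  \<open>(\<alpha> + 1 - \<alpha>\<^sub>n + 2n) h\<^sub>n\<close>, which gives the formula for \<open>\<alpha>\<^sub>n\<close>. The identity for \<open>r\<^sub>n\<close> is the
  recurrence evaluated at \<open>x = t\<close>, using \<open>\<beta>\<^sub>n = h\<^sub>n / h\<^sub>n\<^sub>-\<^sub>1\<close>.\<close>

definition laguerre_weight :: "real \<Rightarrow> real \<Rightarrow> real" where
  "laguerre_weight a x = x powr a * exp (- x)"

lemma laguerre_weight_nonneg: "0 \<le> laguerre_weight a x"
  by (simp add: laguerre_weight_def)

lemma laguerre_weight_pos: "x > 0 \<Longrightarrow> 0 < laguerre_weight a x"
  by (simp add: laguerre_weight_def)

lemma laguerre_moment_absolutely_integrable: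
  assumes "a > -1" "c \<ge> 0"
  shows "(\<lambda>x. x ^ k * laguerre_weight a x) absolutely_integrable_on {c..}"
proof -
  have Gamma: "((\<lambda>x. x powr (a + real k + 1 - 1) / exp x) has_integral Gamma (a + real k + 1)) {0..}"
    using Gamma_integral_real[of "a + real k + 1"] assms by simp
  have eq: "x powr (a + real k + 1 - 1) / exp x = x ^ k * laguerre_weight a x" if "x \<in> {0..}" for x
  proof (cases "x = 0")
    case False
    then have "x > 0"
      using that by simp
    then show ?thesis
      by (simp add: laguerre_weight_def powr_add powr_realpow exp_minus field_simps)
  qed (simp add: laguerre_weight_def)
  then have "((\<lambda>x. x ^ k * laguerre_weight a x) has_integral Gamma (a + real k + 1)) {0..}"
    using has_integral_eq[OF eq Gamma] by simp
  then have "(\<lambda>x. x ^ k * laguerre_weight a x) absolutely_integrable_on {0..}"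
    by (intro nonnegative_absolutely_integrable_1) (auto simp: laguerre_weight_nonneg)
  then show ?thesis
    by (rule set_integrable_subset) (use assms in auto)
qed

lemma laguerre_poly_absolutely_integrable:
  assumes "a > -1" "c \<ge> 0"
  shows "(\<lambda>x. poly q x * laguerre_weight a x) absolutely_integrable_on {c..}"
proof -
  have "(\<lambda>x. \<Sum>i\<le>degree q. coeff q i * (x ^ i * laguerre_weight a x)) absolutely_integrable_on {c..}"
    by (intro absolutely_integrable_sum set_integrable_mult_right
        laguerre_moment_absolutely_integrable assms) auto
  then show ?thesis
    by (simp add: poly_altdef sum_distrib_right mult.assoc)
qed

lemma laguerre_poly_integrable:
  assumes "a > -1" "c \<ge> 0"
  shows "(\<lambda>x. poly q x * laguerre_weight a x) integrable_on {c..}"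
  using laguerre_poly_absolutely_integrable[OF assms] by (rule set_lebesgue_integral_eq_integral)

lemma tendsto_powr_exp_poly_0:
  "((\<lambda>x::real. x powr b * exp (- x) * poly q x) \<longlongrightarrow> 0) at_top"
proof -
  have "((\<lambda>x. \<Sum>i\<le>degree q. coeff q i * (x powr b * exp (- x) * x ^ i)) \<longlongrightarrow> 0) at_top"
  proof (rule tendsto_null_sum)
    fix i
    have "((\<lambda>x::real. x powr b * exp (- x) * x ^ i) \<longlongrightarrow> 0) at_top"
      by real_asymp
    then show "((\<lambda>x. coeff q i * (x powr b * exp (- x) * x ^ i)) \<longlongrightarrow> 0) at_top"
      using tendsto_mult_right_zero by blast
  qed
  then show ?thesis
    by (simp add: poly_altdef sum_distrib_left mult_ac)
qed

definition laguerre_tail :: "real \<Rightarrow> real \<Rightarrow> real poly \<Rightarrow> real" where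
  "laguerre_tail a c q = integral {c..} (\<lambda>x. poly q x * laguerre_weight a x)"

lemma laguerre_tail_add:
  assumes "a > -1" "c \<ge> 0"
  shows "laguerre_tail a c (p + q) = laguerre_tail a c p + laguerre_tail a c q"
  unfolding laguerre_tail_def
  using integral_add[OF laguerre_poly_integrable[OF assms, of p] laguerre_poly_integrable[OF assms, of q]]
  by (simp add: distrib_right)

lemma laguerre_tail_smult: "laguerre_tail a c (smult r q) = r * laguerre_tail a c q"
  unfolding laguerre_tail_def by (simp add: mult.assoc)

text \<open>Pearson's equation \<open>(x w)' = (a + 1 - x) w\<close> for the Laguerre weight: the integrand is the
  derivative of \<open>x\<^sup>a\<^sup>+\<^sup>1 e\<^sup>-\<^sup>x q(x)\<close>, which vanishes at infinity.\<close>
lemma laguerre_tail_pearson: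
  assumes "a > -1" "c \<ge> 0"
  shows "laguerre_tail a c (smult (a + 1) q - pCons 0 q + pCons 0 (pderiv q))
           = - (c powr (a + 1) * exp (- c) * poly q c)"
proof -
  define F where "F x = x powr (a + 1) * exp (- x) * poly q x" for x
  define f where "f x = poly (smult (a + 1) q - pCons 0 q + pCons 0 (pderiv q)) x * laguerre_weight a x" for x
  have F_deriv: "(F has_vector_derivative f x) (at x)" if "x > 0" for x
  proof -
    have "(F has_real_derivative (a + 1) * x powr (a + 1 - 1) * exp (- x) * poly q x
          + x powr (a + 1) * (- exp (- x)) * poly q x + x powr (a + 1) * exp (- x) * poly (pderiv q) x) (at x)"
      unfolding F_def
      by (intro DERIV_mult has_real_derivative_powr poly_DERIV derivative_eq_intros that)
        (auto simp: algebra_simps)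
    moreover have "(a + 1) * x powr (a + 1 - 1) * exp (- x) * poly q x
          + x powr (a + 1) * (- exp (- x)) * poly q x + x powr (a + 1) * exp (- x) * poly (pderiv q) x = f x"
      using that by (simp add: f_def laguerre_weight_def powr_add algebra_simps)
    ultimately show ?thesis
      by (simp add: has_real_derivative_iff_has_vector_derivative)
  qed
  have F_cont: "continuous_on {c..b} F" for b
    unfolding F_def using assms
    by (intro continuous_intros continuous_on_powr') auto
  have f_abs: "f absolutely_integrable_on {c..}"
    unfolding f_def by (rule laguerre_poly_absolutely_integrable[OF assms])
  have "((\<lambda>b. set_lebesgue_integral lebesgue {c..b} f) \<longlongrightarrow> set_lebesgue_integral lebesgue {c..} f) at_top"
    by (rule tendsto_set_lebesgue_integral_at_top) (use f_abs in auto)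
  moreover have "set_lebesgue_integral lebesgue {c..b} f = integral {c..b} f" for b
    using set_integrable_subset[OF f_abs, of "{c..b}"] by (simp add: set_lebesgue_integral_eq_integral)
  moreover have "\<forall>\<^sub>F b in at_top. integral {c..b} f = F b - F c"
    using eventually_ge_at_top[of c]
  proof eventually_elim
    case (elim b)
    then show ?case
      using assms F_cont F_deriv
      by (intro integral_unique fundamental_theorem_of_calculus_interior) auto
  qed
  ultimately have "((\<lambda>b. F b - F c) \<longlongrightarrow> integral {c..} f) at_top"
    using f_abs by (simp add: set_lebesgue_integral_eq_integral tendsto_cong)
  moreover have "((\<lambda>b. F b - F c) \<longlongrightarrow> 0 - F c) at_top"
    unfolding F_def by (intro tendsto_diff tendsto_powr_exp_poly_0 tendsto_const)
  ultimately have "integral {c..} f = - F c"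
    using tendsto_unique by force
  then show ?thesis
    unfolding laguerre_tail_def f_def F_def .
qed

lemma laguerre_tail_square_pos:
  assumes "a > -1" "c \<ge> 0" "q \<noteq> 0"
  shows "0 < laguerre_tail a c (q * q)"
proof -
  define g where "g x = poly (q * q) x * laguerre_weight a x" for x
  have g_nonneg: "0 \<le> g x" for x
    by (simp add: g_def laguerre_weight_nonneg)
  have g_integrable: "g integrable_on {c..}"
    unfolding g_def by (rule laguerre_poly_integrable[OF assms(1,2)])
  obtain x0 where x0: "x0 > c" "poly q x0 \<noteq> 0"
    using poly_roots_finite[OF assms(3)] infinite_Ioi[of c]
    by (metis (mono_tags, lifting) finite_subset greaterThan_iff mem_Collect_eq subsetI)
  have g_cont: "continuous_on {x0..x0 + 1} g"
    unfolding g_def laguerre_weight_def using assms x0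
    by (intro continuous_intros continuous_on_powr') auto
  have "g x0 \<noteq> 0"
    using x0 assms laguerre_weight_pos[of x0 a] by (simp add: g_def)
  then have "integral {x0..x0 + 1} g \<noteq> 0"
    using integral_eq_0_iff[OF g_cont] g_nonneg by auto
  then have "0 < integral {x0..x0 + 1} g"
    using integral_nonneg[OF integrable_continuous_interval[OF g_cont]] g_nonneg
    by (metis order_le_less)
  also have "\<dots> \<le> integral {c..} g"
    using x0 g_nonneg integrable_continuous_interval[OF g_cont] g_integrable
    by (intro integral_subset_le) auto
  finally show ?thesis
    unfolding g_def laguerre_tail_def .
qed

definition jump_functional :: "real \<Rightarrow> real \<Rightarrow> real \<Rightarrow> real \<Rightarrow> real poly \<Rightarrow> real" where
  "jump_functional a A B t q = A * laguerre_tail a 0 q + B * laguerre_tail a t q"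

lemma jump_functional_add:
  assumes "a > -1" "t \<ge> 0"
  shows "jump_functional a A B t (p + q) = jump_functional a A B t p + jump_functional a A B t q"
  using laguerre_tail_add[OF assms(1) order_refl] laguerre_tail_add[OF assms]
  by (simp add: jump_functional_def algebra_simps)

lemma jump_functional_smult:
  "jump_functional a A B t (smult r q) = r * jump_functional a A B t q"
  by (simp add: jump_functional_def laguerre_tail_smult algebra_simps)

lemma has_integral_jump_weight:
  assumes "a > -1" "t \<ge> 0"
  shows "((\<lambda>x. poly q x * jump_weight a A B t x) has_integral jump_functional a A B t q) {0..}"
proof -
  define g where "g x = poly q x * laguerre_weight a x" for x
  have "(g has_integral laguerre_tail a 0 q) {0..}"
    unfolding g_def laguerre_tail_def using laguerre_poly_integrable[OF assms(1) order_refl] by auto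
  moreover have "(g has_integral laguerre_tail a t q) {t<..}"
  proof -
    have "(g has_integral laguerre_tail a t q) {t..}"
      unfolding g_def laguerre_tail_def using laguerre_poly_integrable[OF assms] by auto
    moreover have "negligible {x \<in> {t..} - {t<..}. g x \<noteq> 0}" "negligible {x \<in> {t<..} - {t..}. g x \<noteq> 0}"
      by (rule negligible_subset[of "{t}"]; auto)+
    ultimately show ?thesis
      using has_integral_spike_set_eq by blast
  qed
  then have "((\<lambda>x. if x \<in> {t<..} then g x else 0) has_integral laguerre_tail a t q) {0..}"
    using assms by (subst has_integral_restrict) auto
  ultimately have "((\<lambda>x. A * g x + B * (if x \<in> {t<..} then g x else 0)) has_integral
        jump_functional a A B t q) {0..}"
    unfolding jump_functional_def by (intro has_integral_add has_integral_mult_right)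
  moreover have "A * g x + B * (if x \<in> {t<..} then g x else 0) = poly q x * jump_weight a A B t x" for x
    by (simp add: g_def laguerre_weight_def jump_weight_def heaviside_def algebra_simps)
  ultimately show ?thesis
    by simp
qed

lemma jump_functional_square_pos:
  assumes "a > -1" "A \<ge> 0" "B > 0" "t \<ge> 0" "q \<noteq> 0"
  shows "0 < jump_functional a A B t (q * q)"
proof -
  have "0 \<le> laguerre_tail a 0 (q * q)"
    using laguerre_tail_square_pos[OF assms(1) order_refl assms(5)] by simp
  moreover have "0 < laguerre_tail a t (q * q)"
    using laguerre_tail_square_pos[OF assms(1,4,5)] .
  ultimately show ?thesis
    using assms(2,3) by (simp add: jump_functional_def add_nonneg_pos)
qed

text \<open>The boundary term at \<open>0\<close> vanishes because \<open>a + 1 > 0\<close>.\<close>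
lemma jump_functional_pearson:
  assumes "a > -1" "t \<ge> 0"
  shows "jump_functional a A B t (smult (a + 1) q - pCons 0 q + pCons 0 (pderiv q))
           = - B * t powr (a + 1) * exp (- t) * poly q t"
  using laguerre_tail_pearson[OF assms(1) order_refl] laguerre_tail_pearson[OF assms]
  by (simp add: jump_functional_def)

locale monic_orthogonal_family =
  fixes L :: "real poly \<Rightarrow> real" and P :: "nat \<Rightarrow> real poly"
  assumes L_add: "L (p + q) = L p + L q"
    and L_smult: "L (smult c p) = c * L p"
    and degree_P: "degree (P n) = n"
    and lead_coeff_P: "lead_coeff (P n) = 1"
    and L_P_mult_monom: "k < n \<Longrightarrow> L (P n * monom 1 k) = 0"
begin

lemma L_zero: "L 0 = 0"
  using L_smult[of 0 0] by simp

lemma L_diff: "L (p - q) = L p - L q"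
  using L_add[of "p - q" q] by simp

lemma L_sum: "L (\<Sum>i\<in>S. f i) = (\<Sum>i\<in>S. L (f i))"
  by (induction S rule: infinite_finite_induct) (simp_all add: L_zero L_add)

lemma L_P_mult_eq_0:
  assumes "\<And>k. n \<le> k \<Longrightarrow> coeff q k = 0"
  shows "L (P n * q) = 0"
proof -
  have "P n * q = P n * (\<Sum>i\<le>degree q. monom (coeff q i) i)"
    by (simp add: poly_as_sum_of_monoms)
  also have "\<dots> = (\<Sum>i\<le>degree q. smult (coeff q i) (P n * monom 1 i))"
    unfolding sum_distrib_left
    by (intro sum.cong refl) (metis mult_smult_right smult_monom mult.right_neutral)
  finally have "L (P n * q) = (\<Sum>i\<le>degree q. coeff q i * L (P n * monom 1 i))"
    by (simp add: L_sum L_smult)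
  also have "\<dots> = 0"
    using assms L_P_mult_monom by (intro sum.neutral ballI) (metis mult_eq_0_iff not_le)
  finally show ?thesis .
qed

lemma L_P_mult_P_less: "j < n \<Longrightarrow> L (P n * P j) = 0"
  by (rule L_P_mult_eq_0) (simp add: coeff_eq_0 degree_P)

lemma L_P_mult_x_P_Suc: "L (P n * pCons 0 (P (Suc n))) = L (P (Suc n) * P (Suc n))"
proof -
  have "L (P (Suc n) * (pCons 0 (P n) - P (Suc n))) = 0"
  proof (rule L_P_mult_eq_0)
    fix k assume "Suc n \<le> k"
    then show "coeff (pCons 0 (P n) - P (Suc n)) k = 0"
      using degree_P lead_coeff_P by (cases k) (auto simp: coeff_eq_0 le_Suc_eq)
  qed
  moreover have "P n * pCons 0 (P (Suc n)) = P (Suc n) * P (Suc n) + P (Suc n) * (pCons 0 (P n) - P (Suc n))"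
    by (simp add: algebra_simps mult_pCons_left mult_pCons_right)
  ultimately show ?thesis
    by (simp add: L_add)
qed

lemma L_P_mult_x_pderiv: "L (P n * pCons 0 (pderiv (P n))) = real n * L (P n * P n)"
proof -
  have "L (P n * (pCons 0 (pderiv (P n)) - smult (real n) (P n))) = 0"
  proof (rule L_P_mult_eq_0)
    fix k assume "n \<le> k"
    then show "coeff (pCons 0 (pderiv (P n)) - smult (real n) (P n)) k = 0"
      using degree_P[of n] lead_coeff_P[of n]
      by (cases k) (auto simp: coeff_pderiv coeff_eq_0 le_Suc_eq)
  qed
  then show ?thesis
    by (simp add: algebra_simps L_diff L_smult)
qed

end

locale three_term_recurrence = monic_orthogonal_family +
  fixes a b :: "nat \<Rightarrow> real"
  assumes recurrence: "[:0, 1:] * P n = P (Suc n) + smult (a n) (P n) + smult (b n) (prev_poly P n)"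
begin

lemma pCons_0_P: "pCons 0 (P n) = P (Suc n) + smult (a n) (P n) + smult (b n) (prev_poly P n)"
  using recurrence[of n] by simp

lemma L_P_mult_x_P: "L (P n * pCons 0 (P n)) = a n * L (P n * P n)"
proof -
  have "L (P n * prev_poly P n) = 0"
    by (cases n) (simp_all add: prev_poly_def L_zero L_P_mult_P_less)
  moreover have "L (P n * P (Suc n)) = 0"
    using L_P_mult_P_less[of n "Suc n"] by (simp add: mult.commute)
  ultimately show ?thesis
    by (simp add: pCons_0_P distrib_left L_add L_smult)
qed

lemma b_Suc_mult_L_P_square: "b (Suc n) * L (P n * P n) = L (P (Suc n) * P (Suc n))"
proof -
  have "L (P n * P (Suc (Suc n))) = 0" "L (P n * P (Suc n)) = 0"
    using L_P_mult_P_less[of n "Suc (Suc n)"] L_P_mult_P_less[of n "Suc n"]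
    by (simp_all add: mult.commute)
  then have "L (P n * pCons 0 (P (Suc n))) = b (Suc n) * L (P n * P n)"
    by (simp add: pCons_0_P[of "Suc n"] prev_poly_def distrib_left L_add L_smult)
  then show ?thesis
    using L_P_mult_x_P_Suc by simp
qed

lemma L_pearson_P_square:
  "L (smult c (P n * P n) - pCons 0 (P n * P n) + pCons 0 (pderiv (P n * P n)))
     = (c - a n + 2 * real n) * L (P n * P n)"
proof -
  have "smult 2 p = p + p" for p :: "real poly"
    using smult_add_left[of 1 1 p] by simp
  then have pderiv_square: "pCons 0 (pderiv (P n * P n)) = smult 2 (P n * pCons 0 (pderiv (P n)))"
    by (simp add: pderiv_mult mult_pCons_right mult.commute)
  have x_square: "pCons 0 (P n * P n) = P n * pCons 0 (P n)"
    by (simp add: mult_pCons_right)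
  show ?thesis
    unfolding pderiv_square x_square L_add L_diff L_smult L_P_mult_x_P L_P_mult_x_pderiv
    by (simp add: algebra_simps)
qed

lemma recurrence_eval_div_norms:
  assumes "\<And>m. L (P m * P m) \<noteq> 0"
  shows "poly (P (Suc n)) y * poly (P n) y / L (P n * P n)
           + (if n = 0 then 0 else poly (P n) y * poly (P (n - 1)) y / L (P (n - 1) * P (n - 1)))
         = poly (P n) y ^ 2 / L (P n * P n) * (y - a n)"
proof (cases n)
  case 0
  have P1: "poly (P (Suc 0)) y = (y - a 0) * poly (P 0) y"
    using arg_cong[OF pCons_0_P[of 0], of "\<lambda>p. poly p y"] by (simp add: prev_poly_def algebra_simps)
  show ?thesis
    using assms[of 0] by (simp add: 0 P1 power2_eq_square field_simps)
next
  case (Suc m)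
  have P_Suc: "poly (P (Suc n)) y = (y - a n) * poly (P n) y - b n * poly (P m) y"
    using arg_cong[OF pCons_0_P[of n], of "\<lambda>p. poly p y"] Suc
    by (simp add: prev_poly_def algebra_simps)
  have b_eq: "b n = L (P n * P n) / L (P m * P m)"
    using b_Suc_mult_L_P_square[of m] assms[of m] Suc by (simp add: field_simps)
  show ?thesis
    unfolding P_Suc b_eq using Suc assms[of n] assms[of m] by (simp add: power2_eq_square field_simps)
qed

end

lemma monic_orthogonal_family_jump_functional:
  assumes "a > -1" "t \<ge> 0" "monic_orthogonal (jump_weight a A B t) P"
  shows "monic_orthogonal_family (jump_functional a A B t) P"
proof
  fix p q :: "real poly" and c :: real and n k :: nat
  show "jump_functional a A B t (p + q) = jump_functional a A B t p + jump_functional a A B t q"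
    by (rule jump_functional_add[OF assms(1,2)])
  show "jump_functional a A B t (smult c p) = c * jump_functional a A B t p"
    by (rule jump_functional_smult)
  show "degree (P n) = n" "lead_coeff (P n) = 1"
    using assms(3) unfolding monic_orthogonal_def by blast+
  assume "k < n"
  with assms(3) have "((\<lambda>x. poly (P n * monom 1 k) x * jump_weight a A B t x) has_integral 0) {0..}"
    by (simp add: monic_orthogonal_def poly_monom)
  then show "jump_functional a A B t (P n * monom 1 k) = 0"
    using has_integral_jump_weight[OF assms(1,2)] has_integral_unique by blast
qed

lemma op_norm_jump_weight:
  assumes "a > -1" "t \<ge> 0"
  shows "op_norm (jump_weight a A B t) P n = jump_functional a A B t (P n * P n)"
  using has_integral_jump_weight[OF assms, of "P n * P n"]
  by (simp add: op_norm_def power2_eq_square integral_unique)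

theorem lemma6:
  fixes \<alpha> A B t :: real and P :: "nat \<Rightarrow> real poly" and a b :: "nat \<Rightarrow> real"
  assumes "\<alpha> > 0" and "A \<ge> 0" and "B > 0" and "t > 0"
    and "monic_orthogonal (jump_weight \<alpha> A B t) P"
    and "\<And>n. [:0, 1:] * P n = P (Suc n) + smult (a n) (P n) + smult (b n) (prev_poly P n)"
  shows "\<forall>n. a n = 2 * real n + 1 + \<alpha> + t * R_aux \<alpha> A B t P n
           \<and> r_aux \<alpha> A B t P (Suc n) + r_aux \<alpha> A B t P n = R_aux \<alpha> A B t P n * (t - a n)"
proof (intro allI conjI)
  fix n
  have \<alpha>: "\<alpha> > -1" and t: "t \<ge> 0"
    using assms(1,4) by simp_all
  interpret three_term_recurrence "jump_functional \<alpha> A B t" P a b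
    using monic_orthogonal_family_jump_functional[OF \<alpha> t assms(5)] assms(6)
    by (simp add: three_term_recurrence_def three_term_recurrence_axioms_def)
  let ?h = "\<lambda>m. jump_functional \<alpha> A B t (P m * P m)"
  have h_pos: "?h m > 0" for m
  proof -
    have "P m \<noteq> 0"
      using lead_coeff_P[of m] by auto
    then show ?thesis
      by (rule jump_functional_square_pos[OF \<alpha> assms(2,3) t])
  qed
  have "(\<alpha> + 1 - a n + 2 * real n) * ?h n = - B * t powr (\<alpha> + 1) * exp (- t) * poly (P n) t ^ 2"
    using jump_functional_pearson[OF \<alpha> t, of A B "P n * P n"]
    unfolding L_pearson_P_square poly_mult power2_eq_square .
  moreover have "t powr (\<alpha> + 1) = t * t powr \<alpha>"
    using assms(4) by (simp add: powr_add)
  ultimately show "a n = 2 * real n + 1 + \<alpha> + t * R_aux \<alpha> A B t P n"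
    using h_pos[of n] unfolding R_aux_def op_norm_jump_weight[OF \<alpha> t]
    by (simp add: field_simps)
  show "r_aux \<alpha> A B t P (Suc n) + r_aux \<alpha> A B t P n = R_aux \<alpha> A B t P n * (t - a n)"
    using arg_cong[OF recurrence_eval_div_norms[of n t], of "(*) (B * t powr \<alpha> * exp (- t))"]
      less_imp_neq[OF h_pos, symmetric]
    unfolding r_aux_def R_aux_def op_norm_jump_weight[OF \<alpha> t]
    by (cases n) (simp_all add: distrib_left mult_ac)
qed

end
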